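(* Let $Z=\prod_{c=1}^C Z_c$ with each $Z_c$ finite, let $Z^{\text{train}}\subseteq Z$, and let $z\mapsto x(z)$ be a representation whose kernel $K$ is compositionally structured. Let $f$ be a kernel model of the form $f(x)=\sum_{z^{\text{tr}}\in Z^{\text{train}}} a_{z^{\text{tr}}}K(x,x(z^{\text{tr}}))$ with arbitrary real coefficients $a_{z^{\text{tr}}}$. For $z\in Z$ define $$\mathrm{Conj}(z\mid Z^{\text{train}}):=\{J\subseteq\{1,\dots,C\}:\ \text{there is } z^{\text{tr}}\in Z^{\text{train}} \text{ with } z_c=z^{\text{tr}}_c \text{ for all } c\in J\}.$$ Then there exist functions $f_J:\prod_{c\in J}Z_c\to\mathbb{R}$, for $J\subseteq\{1,\dots,C\}$, such that for every input $x$ representing any $z\in Z$, $$f(x)=\sum_{J\in\mathrm{Conj}(z\mid Z^{\text{train}})} f_J(z_J),\qquad z_J:=(z_c)_{c\in J}.$$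
   Context: A representation $z\mapsto x(z)\in\mathbb{R}^d$ (or more generally a feature map with kernel $K(x,x')=\phi(x)^T\phi(x')$) is compositionally structured iff $K(x(z),x(z'))$ depends only on the number of components $c$ with $z_c=z'_c$. A kernel model trained on inputs representing $Z^{\text{train}}$ is written in dual form as a linear combination of the kernel evaluated against the training inputs. *)

theory Defs
  imports "HOL-Analysis.Analysis"
begin

definition prodspace :: "nat \<Rightarrow> (nat \<Rightarrow> 'a set) \<Rightarrow> (nat \<Rightarrow> 'a) set" where
  "prodspace C Zc = PiE {1..C} Zc"

definition comp_structured ::
  "nat \<Rightarrow> (nat \<Rightarrow> 'a set) \<Rightarrow> ((nat \<Rightarrow> 'a) \<Rightarrow> 'v) \<Rightarrow> ('v \<Rightarrow> 'v \<Rightarrow> real) \<Rightarrow> bool" where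
  "comp_structured C Zc x K \<longleftrightarrow>
     (\<exists>\<kappa> :: nat \<Rightarrow> real. \<forall>z\<in>prodspace C Zc. \<forall>z'\<in>prodspace C Zc.
        K (x z) (x z') = \<kappa> (card {c\<in>{1..C}. z c = z' c}))"

definition Conj :: "nat \<Rightarrow> (nat \<Rightarrow> 'a) \<Rightarrow> (nat \<Rightarrow> 'a) set \<Rightarrow> nat set set" where
  "Conj C z Ztrain = {J. J \<subseteq> {1..C} \<and> (\<exists>ztr\<in>Ztrain. \<forall>c\<in>J. z c = ztr c)}"

end

theory Submission
  imports Defs
begin

text \<open>Since the kernel value \<open>\<kappa> n\<close> depends only on the number \<open>n\<close> of agreeing components,
  binomial inversion writes it as \<open>\<kappa> n = \<Sum>k\<le>n. (n choose k) g k\<close>, i.e. as a sum of \<open>g \<bar>J\<bar>\<close>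
  over all sets \<open>J\<close> of components on which the two inputs agree. Substituting this into the
  dual form of \<open>f\<close> and exchanging the two sums groups the training points by the set \<open>J\<close>;
  a set \<open>J\<close> contributes only if some training point agrees with \<open>z\<close> on \<open>J\<close>, i.e. if
  \<open>J \<in> Conj C z Ztrain\<close>, and its contribution depends only on \<open>z\<close> restricted to \<open>J\<close>.\<close>

lemma exists_binomial_inverse:
  fixes \<kappa> :: "nat \<Rightarrow> 'a::comm_ring_1"
  shows "\<exists>g. \<forall>n\<le>N. \<kappa> n = (\<Sum>k\<le>n. of_nat (n choose k) * g k)"
proof (induction N)
  case 0
  show ?case by (rule exI[of _ "\<lambda>_. \<kappa> 0"]) simp
next
  case (Suc N)
  then obtain g where g: "\<forall>n\<le>N. \<kappa> n = (\<Sum>k\<le>n. of_nat (n choose k) * g k)" by blast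
  define g' where "g' = g(Suc N := \<kappa> (Suc N) - (\<Sum>k\<le>N. of_nat (Suc N choose k) * g k))"
  have agree: "(\<Sum>k\<le>n. of_nat (m choose k) * g' k) = (\<Sum>k\<le>n. of_nat (m choose k) * g k)"
    if "n \<le> N" for m n
    using that by (intro sum.cong) (auto simp: g'_def)
  have "\<kappa> n = (\<Sum>k\<le>n. of_nat (n choose k) * g' k)" if "n \<le> Suc N" for n
  proof (cases "n = Suc N")
    case True
    then show ?thesis by (simp add: agree) (simp add: g'_def)
  next
    case False
    with that g show ?thesis by (simp add: agree)
  qed
  then show ?case by blast
qed

lemma sum_Pow_card:
  fixes g :: "nat \<Rightarrow> 'a::comm_semiring_1"
  assumes "finite S"
  shows "(\<Sum>J\<in>Pow S. g (card J)) = (\<Sum>k\<le>card S. of_nat (card S choose k) * g k)"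
proof -
  have "(\<Sum>J\<in>Pow S. g (card J)) = (\<Sum>k\<le>card S. \<Sum>J\<in>{J \<in> Pow S. card J = k}. g (card J))"
    by (rule sum.group[symmetric]) (use assms card_mono in auto)
  also have "\<dots> = (\<Sum>k\<le>card S. of_nat (card {J. J \<subseteq> S \<and> card J = k}) * g k)"
    by (intro sum.cong) auto
  finally show ?thesis
    by (simp add: n_subsets[OF assms])
qed

lemma comp_structured_kernel_expansion:
  assumes "comp_structured C Zc x K"
  obtains g :: "nat \<Rightarrow> real"
  where "\<And>z z'. z \<in> prodspace C Zc \<Longrightarrow> z' \<in> prodspace C Zc \<Longrightarrow>
           K (x z) (x z') = (\<Sum>J\<in>Pow {c\<in>{1..C}. z c = z' c}. g (card J))"
proof -
  obtain \<kappa> :: "nat \<Rightarrow> real" where \<kappa>: "\<And>z z'. z \<in> prodspace C Zc \<Longrightarrow> z' \<in> prodspace C Zc \<Longrightarrow>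
      K (x z) (x z') = \<kappa> (card {c\<in>{1..C}. z c = z' c})"
    using assms unfolding comp_structured_def by blast
  obtain g :: "nat \<Rightarrow> real" where g: "\<forall>n\<le>C. \<kappa> n = (\<Sum>k\<le>n. real (n choose k) * g k)"
    using exists_binomial_inverse by blast
  show thesis
  proof (rule that)
    fix z z' assume "z \<in> prodspace C Zc" "z' \<in> prodspace C Zc"
    define A where "A = {c\<in>{1..C}. z c = z' c}"
    have "card A \<le> C"
      unfolding A_def by (rule order_trans[OF card_mono[of "{1..C}"]]) auto
    then have "\<kappa> (card A) = (\<Sum>J\<in>Pow A. g (card J))"
      using g by (simp add: sum_Pow_card A_def)
    with \<kappa> show "K (x z) (x z') = (\<Sum>J\<in>Pow {c\<in>{1..C}. z c = z' c}. g (card J))"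
      using \<open>z \<in> prodspace C Zc\<close> \<open>z' \<in> prodspace C Zc\<close> by (simp add: A_def)
  qed
qed

lemma sum_Pow_exchange:
  fixes a :: "'t \<Rightarrow> 'a::comm_semiring_1"
  assumes "finite T" "finite U" "\<And>t. t \<in> T \<Longrightarrow> A t \<subseteq> U"
  shows "(\<Sum>t\<in>T. a t * (\<Sum>J\<in>Pow (A t). h J)) = (\<Sum>J\<in>Pow U. h J * (\<Sum>t\<in>{t\<in>T. J \<subseteq> A t}. a t))"
proof -
  have "(\<Sum>t\<in>T. a t * (\<Sum>J\<in>Pow (A t). h J)) = (\<Sum>t\<in>T. \<Sum>J\<in>Pow U. h J * (if J \<subseteq> A t then a t else 0))"
  proof (intro sum.cong refl)
    fix t assume "t \<in> T"
    then have "(\<Sum>J\<in>Pow U. h J * (if J \<subseteq> A t then a t else 0)) = (\<Sum>J\<in>Pow (A t). h J * a t)"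
      using assms by (intro sum.mono_neutral_cong_right) auto
    then show "a t * (\<Sum>J\<in>Pow (A t). h J) = (\<Sum>J\<in>Pow U. h J * (if J \<subseteq> A t then a t else 0))"
      by (simp add: sum_distrib_left mult.commute)
  qed
  also have "\<dots> = (\<Sum>J\<in>Pow U. \<Sum>t\<in>T. h J * (if J \<subseteq> A t then a t else 0))"
    by (rule sum.swap)
  also have "\<dots> = (\<Sum>J\<in>Pow U. h J * (\<Sum>t\<in>{t\<in>T. J \<subseteq> A t}. a t))"
    using assms(1) by (simp add: sum.inter_filter sum_distrib_left)
  finally show ?thesis .
qed

theorem theorem1:
  fixes C :: nat
    and Zc :: "nat \<Rightarrow> 'a set"
    and Ztrain :: "(nat \<Rightarrow> 'a) set"
    and x :: "(nat \<Rightarrow> 'a) \<Rightarrow> 'v"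
    and K :: "'v \<Rightarrow> 'v \<Rightarrow> real"
    and a :: "(nat \<Rightarrow> 'a) \<Rightarrow> real"
    and f :: "'v \<Rightarrow> real"
  assumes fin: "\<And>c. c \<in> {1..C} \<Longrightarrow> finite (Zc c)"
    and train: "Ztrain \<subseteq> prodspace C Zc"
    and cs: "comp_structured C Zc x K"
    and fdef: "\<And>v. f v = (\<Sum>ztr\<in>Ztrain. a ztr * K v (x ztr))"
  shows "\<exists>fJ :: nat set \<Rightarrow> (nat \<Rightarrow> 'a) \<Rightarrow> real.
           \<forall>z\<in>prodspace C Zc.
             f (x z) = (\<Sum>J\<in>Conj C z Ztrain. fJ J (restrict z J))"
proof -
  obtain g where g: "\<And>z z'. z \<in> prodspace C Zc \<Longrightarrow> z' \<in> prodspace C Zc \<Longrightarrow>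
      K (x z) (x z') = (\<Sum>J\<in>Pow {c\<in>{1..C}. z c = z' c}. g (card J))"
    using comp_structured_kernel_expansion[OF cs] by blast
  have "finite Ztrain"
    by (rule finite_subset[OF train]) (auto simp: prodspace_def intro!: finite_PiE fin)
  define fJ where "fJ J w = g (card J) * (\<Sum>ztr\<in>{ztr\<in>Ztrain. \<forall>c\<in>J. w c = ztr c}. a ztr)"
    for J :: "nat set" and w :: "nat \<Rightarrow> 'a"
  have "f (x z) = (\<Sum>J\<in>Conj C z Ztrain. fJ J (restrict z J))" if z: "z \<in> prodspace C Zc" for z
  proof -
    have "f (x z) = (\<Sum>ztr\<in>Ztrain. a ztr * (\<Sum>J\<in>Pow {c\<in>{1..C}. z c = ztr c}. g (card J)))"
      unfolding fdef using g z train by (intro sum.cong refl) auto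
    also have "\<dots> = (\<Sum>J\<in>Pow {1..C}. g (card J) * (\<Sum>ztr\<in>{ztr\<in>Ztrain. J \<subseteq> {c\<in>{1..C}. z c = ztr c}}. a ztr))"
      using \<open>finite Ztrain\<close> by (intro sum_Pow_exchange) auto
    also have "\<dots> = (\<Sum>J\<in>Pow {1..C}. fJ J (restrict z J))"
      unfolding fJ_def by (intro sum.cong refl arg_cong2[where f = "(*)"] sum.cong) auto
    also have "\<dots> = (\<Sum>J\<in>Conj C z Ztrain. fJ J (restrict z J))"
      by (rule sum.mono_neutral_right) (auto simp: Conj_def fJ_def intro!: sum.neutral)
    finally show ?thesis .
  qed
  then show ?thesis by blast
qed

end
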